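(* Let $k,m$ be positive integers, let $N(\mu_1,I+\Sigma_1),\dots,N(\mu_k,I+\Sigma_k)$ be Gaussians on $\mathbb{R}^d$, and let $P_1,\dots,P_k$ be real polynomials in $X=(X_1,\dots,X_d)$ of degree at most $m$. Let \[f(X,y)=\sum_{j=1}^kP_j(Xy)e^{\mu_j(X)y+\frac12\Sigma_j(X)y^2}=\sum_{r\ge0}\frac{f_r(X)}{r!}y^r.\] Let $\kappa=(m+1)(2^k-1)$. Then there are polynomials $R_{j,l}(X)$ in $d$ variables, for $0\le j\le\kappa$ and $0\le l\le\kappa-j$, such that: (1) $R_{j,l}$ is homogeneous of degree $\kappa-j+l$, and $R_{\kappa,0}=1$; (2) each $R_{j,l}$ is $(A,B)$-simple with respect to $\{\mu_1(X),\Sigma_1(X),\dots,\mu_k(X),\Sigma_k(X)\}$ for some $A,B$ depending only on $k,m$; (3) for all integers $a\ge\kappa$, \[\sum_{j=0}^{\kappa}\sum_{l=0}^{\kappa-j}\frac{f_{a-\kappa+j-l}(X)\,R_{j,l}(X)}{(a-\kappa-l)!}=0,\] where terms with a negative factorial in the denominator are treated as $0$.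
   Context: $\mu(X)=\mu^TX$, $\Sigma(X)=X^T\Sigma X$, and $Xy=(X_1y,\dots,X_dy)$. $f(X,y)$ is regarded as a formal power series in $y$ whose coefficients are polynomials in $X$; the $f_r$ are its primary terms. Given a family $\mathcal{S}$ of polynomials in $X$, a polynomial $Q(X)$ is $(A,B)$-simple with respect to $\mathcal{S}$ if it is a linear combination of at most $A$ terms, all coefficients of magnitude at most $A$, each term a product of at most $B$ polynomials from $\mathcal{S}$. *)

theory Defs
  imports "HOL-Analysis.Analysis"
begin

text \<open>Points of R^d are represented as functions nat => real; only the
  coordinates 0..d-1 are used.\<close>

definition monomial :: "nat \<Rightarrow> (nat \<Rightarrow> nat) \<Rightarrow> (nat \<Rightarrow> real) \<Rightarrow> real" where
  "monomial d \<alpha> X = (\<Prod>i<d. X i ^ \<alpha> i)"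

definition poly_deg_le :: "nat \<Rightarrow> nat \<Rightarrow> ((nat \<Rightarrow> real) \<Rightarrow> real) \<Rightarrow> bool" where
  "poly_deg_le d m P \<longleftrightarrow> (\<exists>M c. finite M \<and>
      (\<forall>\<alpha>\<in>M. (\<forall>i\<ge>d. \<alpha> i = 0) \<and> sum \<alpha> {..<d} \<le> m) \<and>
      (\<forall>X. P X = (\<Sum>\<alpha>\<in>M. c \<alpha> * monomial d \<alpha> X)))"

definition hom_poly :: "nat \<Rightarrow> nat \<Rightarrow> ((nat \<Rightarrow> real) \<Rightarrow> real) \<Rightarrow> bool" where
  "hom_poly d n P \<longleftrightarrow> (\<exists>M c. finite M \<and>
      (\<forall>\<alpha>\<in>M. (\<forall>i\<ge>d. \<alpha> i = 0) \<and> sum \<alpha> {..<d} = n) \<and>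
      (\<forall>X. P X = (\<Sum>\<alpha>\<in>M. c \<alpha> * monomial d \<alpha> X)))"

definition simple_wrt :: "((nat \<Rightarrow> real) \<Rightarrow> real) set \<Rightarrow> nat \<Rightarrow> nat \<Rightarrow> ((nat \<Rightarrow> real) \<Rightarrow> real) \<Rightarrow> bool" where
  "simple_wrt S A B Q \<longleftrightarrow> (\<exists>T c L. T \<le> A \<and>
      (\<forall>t<T. \<bar>c t\<bar> \<le> real A \<and> length (L t) \<le> B \<and> set (L t) \<subseteq> S) \<and>
      (\<forall>X. Q X = (\<Sum>t<T. c t * prod_list (map (\<lambda>q. q X) (L t)))))"

definition lin_form :: "nat \<Rightarrow> (nat \<Rightarrow> real) \<Rightarrow> (nat \<Rightarrow> real) \<Rightarrow> real" where
  "lin_form d \<mu> X = (\<Sum>i<d. \<mu> i * X i)"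

definition quad_form :: "nat \<Rightarrow> (nat \<Rightarrow> nat \<Rightarrow> real) \<Rightarrow> (nat \<Rightarrow> real) \<Rightarrow> real" where
  "quad_form d S X = (\<Sum>i<d. \<Sum>i'<d. X i * S i i' * X i')"

text \<open>I + Sigma is a valid covariance matrix (symmetric positive semidefinite).\<close>
definition covariance_ok :: "nat \<Rightarrow> (nat \<Rightarrow> nat \<Rightarrow> real) \<Rightarrow> bool" where
  "covariance_ok d S \<longleftrightarrow> (\<forall>i<d. \<forall>i'<d. S i i' = S i' i) \<and>
     (\<forall>v. (\<Sum>i<d. v i * v i) + quad_form d S v \<ge> 0)"

definition gen_fun :: "nat \<Rightarrow> nat \<Rightarrow> (nat \<Rightarrow> nat \<Rightarrow> real) \<Rightarrow> (nat \<Rightarrow> nat \<Rightarrow> nat \<Rightarrow> real)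
    \<Rightarrow> (nat \<Rightarrow> (nat \<Rightarrow> real) \<Rightarrow> real) \<Rightarrow> (nat \<Rightarrow> real) \<Rightarrow> real \<Rightarrow> real" where
  "gen_fun d k \<mu> S P X y = (\<Sum>j<k. P j (\<lambda>i. X i * y) *
      exp (lin_form d (\<mu> j) X * y + quad_form d (S j) X * y\<^sup>2 / 2))"

definition primary_term :: "nat \<Rightarrow> nat \<Rightarrow> (nat \<Rightarrow> nat \<Rightarrow> real) \<Rightarrow> (nat \<Rightarrow> nat \<Rightarrow> nat \<Rightarrow> real)
    \<Rightarrow> (nat \<Rightarrow> (nat \<Rightarrow> real) \<Rightarrow> real) \<Rightarrow> nat \<Rightarrow> (nat \<Rightarrow> real) \<Rightarrow> real" where
  "primary_term d k \<mu> S P r X = (deriv ^^ r) (gen_fun d k \<mu> S P X) 0"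

end

theory Submission
  imports Defs "HOL-Library.Function_Algebras" "HOL-Computational_Algebra.Polynomial_FPS"
begin

text \<open>
  For \<open>c = (a, b)\<close> let \<open>L\<^sub>c G = G' - (a + b y) G\<close> on formal power series in \<open>y\<close>. It kills
  \<open>e\<^sub>c = exp (a y + b y\<^sup>2 / 2)\<close>, and by the product rule it acts on \<open>q \<cdot> e\<^sub>c\<close> as \<open>q' \<cdot> e\<^sub>c\<close> and,
  for any other \<open>c'\<close>, sends \<open>q \<cdot> e\<^sub>c\<close> to \<open>q\<^sub>1 \<cdot> e\<^sub>c\<close> with \<open>deg q\<^sub>1 \<le> deg q + 1\<close>. Hence applying
  \<open>L\<^sub>c\<^sub>j\<close> exactly \<open>(m + 1) 2\<^sup>j\<close> times for \<open>j = 0, \<dots>, k - 1\<close> (in this order) annihilates every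
  summand \<open>P\<^sub>j (X y) e\<^sub>c\<^sub>j\<close> of \<open>f\<close>. The composite operator has order \<open>\<kappa>\<close>; written in normal
  order \<open>\<Sum> R\<^sub>j\<^sub>,\<^sub>l y\<^sup>l D\<^sup>j\<close>, the coefficient of \<open>y\<^sup>a\<^sup>-\<^sup>\<kappa>\<close> of the zero series is the claimed
  identity. The \<open>R\<^sub>j\<^sub>,\<^sub>l\<close> come out of a recursion with integer coefficients in the
  \<open>\<mu>\<^sub>j(X)\<close> and \<open>\<Sigma>\<^sub>j(X)\<close>, which makes them homogeneous and simple.
\<close>

section \<open>Power series expansions\<close>

lemma fps_nth_eq_higher_deriv:
  fixes f :: "'a :: {banach, real_normed_field} \<Rightarrow> 'a"
  assumes "f has_fps_expansion F"
  shows "fps_nth F n = (deriv ^^ n) f 0 / fact n"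
proof -
  have "(deriv ^^ n) f has_fps_expansion (fps_deriv ^^ n) F"
    by (induction n) (use assms in \<open>auto intro: has_fps_expansion_deriv\<close>)
  then have "(deriv ^^ n) f 0 = fps_nth ((fps_deriv ^^ n) F) 0"
    by (auto simp: has_fps_expansion_def eval_fps_at_0 dest: eventually_nhds_x_imp_x)
  then show ?thesis
    by (simp add: fps_0th_higher_deriv)
qed

lemma has_fps_expansion_unique:
  fixes f :: "'a :: {banach, real_normed_field} \<Rightarrow> 'a"
  assumes "f has_fps_expansion F" "f has_fps_expansion G"
  shows "F = G"
  using assms by (simp add: fps_eq_iff fps_nth_eq_higher_deriv)

lemma has_fps_expansion_poly:
  fixes p :: "'a::{banach, real_normed_field} poly"
  shows "poly p has_fps_expansion fps_of_poly p"
  by (simp add: has_fps_expansion_def)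

lemma has_fps_expansion_exp_mult_square:
  fixes c :: real
  shows "(\<lambda>y. exp (c * y\<^sup>2)) has_fps_expansion
           Abs_fps (\<lambda>n. if even n then c ^ (n div 2) / fact (n div 2) else 0)"
proof (rule has_fps_expansionI, rule always_eventually, rule allI)
  fix y :: real
  have "(\<lambda>n. (c * y\<^sup>2) ^ n /\<^sub>R fact n) sums exp (c * y\<^sup>2)"
    by (rule exp_converges)
  from sums_if[OF sums_zero this]
  have "(\<lambda>n. if even n then (c * y\<^sup>2) ^ (n div 2) /\<^sub>R fact (n div 2) else 0) sums exp (c * y\<^sup>2)"
    by simp
  also have "(\<lambda>n. if even n then (c * y\<^sup>2) ^ (n div 2) /\<^sub>R fact (n div 2) else 0)
      = (\<lambda>n. (if even n then c ^ (n div 2) / fact (n div 2) else 0) * y ^ n)"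
  proof
    fix n :: nat
    show "(if even n then (c * y\<^sup>2) ^ (n div 2) /\<^sub>R fact (n div 2) else 0)
        = (if even n then c ^ (n div 2) / fact (n div 2) else 0) * y ^ n"
      by (cases "even n") (auto simp: power_mult_distrib divide_inverse mult_ac simp flip: power_mult elim!: evenE)
  qed
  finally show "(\<lambda>n. fps_nth (Abs_fps (\<lambda>n. if even n then c ^ (n div 2) / fact (n div 2) else 0)) n * y ^ n)
      sums exp (c * y\<^sup>2)"
    by simp
qed

section \<open>Operators annihilating Gaussian factors\<close>

definition gauss_op :: "'a \<times> 'a \<Rightarrow> 'a::comm_ring_1 fps \<Rightarrow> 'a fps" where
  "gauss_op c G = fps_deriv G - (fps_const (fst c) + fps_const (snd c) * fps_X) * G"

lemma gaussian_has_fps_expansion: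
  fixes a b :: real
  obtains E where "(\<lambda>y. exp (a * y + b * y\<^sup>2 / 2)) has_fps_expansion E" "gauss_op (a, b) E = 0"
proof -
  define e where "e y = exp (a * y + b * y\<^sup>2 / 2)" for y :: real
  have "(\<lambda>y. exp (a * y) * exp (b / 2 * y\<^sup>2)) has_fps_expansion
          fps_exp a * Abs_fps (\<lambda>n. if even n then (b / 2) ^ (n div 2) / fact (n div 2) else 0)"
    (is "_ has_fps_expansion ?E")
    by (intro has_fps_expansion_mult has_fps_expansion_exp has_fps_expansion_exp_mult_square)
  moreover have "(\<lambda>y. exp (a * y) * exp (b / 2 * y\<^sup>2)) = e"
    by (auto simp: e_def simp flip: exp_add)
  ultimately have E: "e has_fps_expansion ?E"
    by simp
  have "deriv e = (\<lambda>y. (a + b * y) * e y)"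
  proof
    fix y
    show "deriv e y = (a + b * y) * e y"
      unfolding e_def
      by (rule DERIV_imp_deriv) (auto intro!: derivative_eq_intros simp: power2_eq_square algebra_simps)
  qed
  then have "deriv e has_fps_expansion (fps_const a + fps_const b * fps_X) * ?E"
    by (simp only:) (intro fps_expansion_intros E)
  with has_fps_expansion_deriv[OF E] have ode: "fps_deriv ?E = (fps_const a + fps_const b * fps_X) * ?E"
    by (rule has_fps_expansion_unique)
  have "gauss_op (a, b) ?E = 0"
    unfolding gauss_op_def ode by simp
  with E show ?thesis
    unfolding e_def by (rule that)
qed

lemma gauss_op_add: "gauss_op c (G + H) = gauss_op c G + gauss_op c H"
  by (simp add: gauss_op_def algebra_simps)

lemma foldr_gauss_op_zero: "foldr gauss_op ps 0 = 0"
  by (induction ps) (simp_all add: gauss_op_def)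

lemma foldr_gauss_op_sum:
  "foldr gauss_op ps (\<Sum>i\<in>A. G i) = (\<Sum>i\<in>A. foldr gauss_op ps (G i))"
proof -
  have add: "foldr gauss_op ps (G + H) = foldr gauss_op ps G + foldr gauss_op ps H" for G H
    by (induction ps) (simp_all add: gauss_op_add)
  show ?thesis
    by (induction A rule: infinite_finite_induct) (simp_all add: add foldr_gauss_op_zero)
qed

lemma gauss_op_mult:
  "gauss_op c' (G * E) = gauss_op (fst c' - fst c, snd c' - snd c) G * E + G * gauss_op c E"
  by (simp add: gauss_op_def algebra_simps flip: fps_const_sub)

lemma gauss_op_fps_of_poly:
  fixes q :: "'a::idom poly"
  shows "gauss_op c (fps_of_poly q) = fps_of_poly (pderiv q - [:fst c, snd c:] * q)"
  by (simp add: gauss_op_def fps_of_poly_simps algebra_simps)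

lemma foldr_gauss_op_poly_mult:
  fixes q :: "'a::idom poly"
  assumes "gauss_op c E = 0"
  shows "\<exists>q'. foldr gauss_op ps (fps_of_poly q * E) = fps_of_poly q' * E \<and>
              degree q' \<le> degree q + length ps"
proof (induction ps)
  case (Cons c' ps)
  then obtain q' where q': "foldr gauss_op ps (fps_of_poly q * E) = fps_of_poly q' * E"
    and deg: "degree q' \<le> degree q + length ps"
    by blast
  define q'' where "q'' = pderiv q' - [:fst c' - fst c, snd c' - snd c:] * q'"
  have "foldr gauss_op (c' # ps) (fps_of_poly q * E) = fps_of_poly q'' * E"
    by (simp add: q' gauss_op_mult[of c' _ _ c] assms gauss_op_fps_of_poly q''_def)
  moreover have "degree q'' \<le> degree q' + 1"
  proof -
    have "degree ([:fst c' - fst c, snd c' - snd c:] * q') \<le> 1 + degree q'"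
      by (rule order_trans[OF degree_mult_le]) simp
    moreover have "degree (pderiv q') \<le> degree q' + 1"
      by (rule degree_le) (simp add: coeff_pderiv coeff_eq_0)
    ultimately show ?thesis
      unfolding q''_def by (intro order_trans[OF degree_diff_le_max] max.boundedI) linarith+
  qed
  ultimately show ?case
    using deg by (intro exI[of _ q'']) simp
qed auto

lemma foldr_gauss_op_replicate:
  fixes q :: "'a::idom poly"
  assumes "gauss_op c E = 0"
  shows "foldr gauss_op (replicate t c) (fps_of_poly q * E) = fps_of_poly ((pderiv ^^ t) q) * E"
  by (induction t) (simp_all add: gauss_op_mult[of c _ _ c] assms gauss_op_fps_of_poly)

lemma higher_pderiv_eq_0:
  assumes "degree q < t"
  shows "(pderiv ^^ t) q = 0"
  using assms by (intro poly_eqI) (simp add: coeff_higher_pderiv coeff_eq_0)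

text \<open>Blocks act innermost first, so block \<open>i\<close> meets a polynomial factor of degree at most
  \<open>m + (m + 1)(2\<^sup>i - 1) < (m + 1) 2\<^sup>i\<close>, the number of derivatives it applies.\<close>

fun annihilator :: "nat \<Rightarrow> (nat \<Rightarrow> 'p) \<Rightarrow> nat \<Rightarrow> 'p list" where
  "annihilator m c 0 = []"
| "annihilator m c (Suc i) = replicate (2 ^ i * (m + 1)) (c i) @ annihilator m c i"

lemma length_annihilator: "length (annihilator m c i) = (m + 1) * (2 ^ i - 1)"
proof (induction i)
  case (Suc i)
  obtain r where "(2::nat) ^ i = Suc r"
    by (metis not0_implies_Suc power_not_zero zero_neq_numeral)
  with Suc show ?case
    by (simp add: algebra_simps)
qed simp

lemma set_annihilator: "set (annihilator m c i) \<subseteq> c ` {..<i}"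
  by (induction i) auto

lemma map_annihilator: "map f (annihilator m c i) = annihilator m (f \<circ> c) i"
  by (induction i) simp_all

lemma foldr_gauss_op_annihilator:
  fixes q :: "'a::idom poly"
  assumes E: "gauss_op (c j) E = 0" and q: "degree q \<le> m" and "j < i"
  shows "foldr gauss_op (annihilator m c i) (fps_of_poly q * E) = 0"
  using \<open>j < i\<close>
proof (induction i)
  case (Suc i)
  show ?case
  proof (cases "j < i")
    case True
    then show ?thesis
      by (simp only: annihilator.simps foldr_append o_apply Suc.IH foldr_gauss_op_zero)
  next
    case False
    with Suc.prems have "j = i"
      by simp
    obtain q' where q': "foldr gauss_op (annihilator m c i) (fps_of_poly q * E) = fps_of_poly q' * E"
      and "degree q' \<le> degree q + length (annihilator m c i)"
      using foldr_gauss_op_poly_mult[OF E] by blast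
    moreover have "m + 1 \<le> 2 ^ i * (m + 1)"
      using mult_le_mono1[of 1 "2 ^ i" "m + 1"] by simp
    ultimately have "degree q' < 2 ^ i * (m + 1)"
      using q by (simp add: length_annihilator algebra_simps)
    then show ?thesis
      using \<open>j = i\<close> foldr_gauss_op_replicate[OF E]
      by (simp add: q' higher_pderiv_eq_0)
  qed
qed simp

section \<open>Normal ordering\<close>

lemma sum_atMost_shift_right:
  fixes N :: nat
  assumes "f N = 0"
  shows "(\<Sum>j\<le>N. f j) = (\<Sum>j\<le>N. if j = 0 then 0 else f (j - 1))"
proof (cases N)
  case (Suc N')
  have "(\<Sum>j\<le>Suc N'. if j = 0 then 0 else f (j - 1)) = (\<Sum>j\<le>N'. f j)"
    by (subst sum.atMost_Suc_shift) simp
  with Suc assms show ?thesis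
    by simp
qed (use assms in simp)

lemma sum_atMost_shift_left:
  fixes N :: nat
  assumes "f 0 = 0" "f (Suc N) = 0"
  shows "(\<Sum>l\<le>N. f l) = (\<Sum>l\<le>N. f (Suc l))"
  using sum.atMost_Suc_shift[of f N] sum.atMost_Suc[of f N] assms by simp

lemma sum_triangle_eq_sum_square:
  fixes n N :: nat
  assumes "\<And>j l. n < j + l \<Longrightarrow> h j l = 0" "n \<le> N"
  shows "(\<Sum>j\<le>n. \<Sum>l\<le>n - j. h j l) = (\<Sum>j\<le>N. \<Sum>l\<le>N. h j l)"
proof -
  have "(\<Sum>l\<le>n - j. h j l) = (\<Sum>l\<le>N. h j l)" if "j \<le> n" for j
  proof (rule sum.mono_neutral_left)
    show "{..n - j} \<subseteq> {..N}"
      using assms(2) by simp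
    show "\<forall>l\<in>{..N} - {..n - j}. h j l = 0"
      using that by (auto intro!: assms(1))
  qed simp
  then have "(\<Sum>j\<le>n. \<Sum>l\<le>n - j. h j l) = (\<Sum>j\<le>n. \<Sum>l\<le>N. h j l)"
    by simp
  also have "\<dots> = (\<Sum>j\<le>N. \<Sum>l\<le>N. h j l)"
    using assms by (intro sum.mono_neutral_left) auto
  finally show ?thesis .
qed

definition normal_ordered_op :: "nat \<Rightarrow> (nat \<Rightarrow> nat \<Rightarrow> 'a) \<Rightarrow> 'a::comm_ring_1 fps \<Rightarrow> 'a fps" where
  "normal_ordered_op N C G = (\<Sum>j\<le>N. \<Sum>l\<le>N. fps_const (C j l) * fps_X ^ l * (fps_deriv ^^ j) G)"

lemma normal_ordered_op_add:
  "normal_ordered_op N (\<lambda>j l. C j l + D j l) G = normal_ordered_op N C G + normal_ordered_op N D G"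
  by (simp add: normal_ordered_op_def algebra_simps sum.distrib flip: fps_const_add)

lemma normal_ordered_op_diff:
  "normal_ordered_op N (\<lambda>j l. C j l - D j l) G = normal_ordered_op N C G - normal_ordered_op N D G"
  by (simp add: normal_ordered_op_def algebra_simps sum_subtractf flip: fps_const_sub)

lemma fps_const_mult_normal_ordered_op:
  "fps_const a * normal_ordered_op N C G = normal_ordered_op N (\<lambda>j l. a * C j l) G"
  by (simp add: normal_ordered_op_def sum_distrib_left mult.assoc flip: fps_const_mult)

lemma fps_X_mult_normal_ordered_op:
  assumes "\<And>j l. N \<le> j + l \<Longrightarrow> C j l = 0"
  shows "fps_X * normal_ordered_op N C G =
           normal_ordered_op N (\<lambda>j l. if l = 0 then 0 else C j (l - 1)) G"
proof -
  have "(\<Sum>l\<le>N. fps_const (C j l) * fps_X ^ Suc l * (fps_deriv ^^ j) G) =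
        (\<Sum>l\<le>N. fps_const (if l = 0 then 0 else C j (l - 1)) * fps_X ^ l * (fps_deriv ^^ j) G)" for j
    using assms by (subst sum_atMost_shift_right) (auto intro: sum.cong)
  then show ?thesis
    by (simp add: normal_ordered_op_def sum_distrib_left algebra_simps)
qed

lemma fps_deriv_normal_ordered_op:
  assumes "\<And>j l. N \<le> j + l \<Longrightarrow> C j l = 0"
  shows "fps_deriv (normal_ordered_op N C G) =
           normal_ordered_op N (\<lambda>j l. (if j = 0 then 0 else C (j - 1) l) + of_nat (l + 1) * C j (l + 1)) G"
proof -
  have lowered: "(\<Sum>l\<le>N. fps_const (C j l) * (of_nat l * fps_X ^ (l - 1)) * (fps_deriv ^^ j) G) =
        (\<Sum>l\<le>N. fps_const (of_nat (l + 1) * C j (l + 1)) * fps_X ^ l * (fps_deriv ^^ j) G)" for j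
    using assms by (subst sum_atMost_shift_left)
      (auto simp: algebra_simps simp flip: fps_const_add fps_const_mult fps_of_nat)
  have raised: "(\<Sum>j\<le>N. \<Sum>l\<le>N. fps_const (C j l) * fps_X ^ l * (fps_deriv ^^ Suc j) G) =
        (\<Sum>j\<le>N. \<Sum>l\<le>N. fps_const (if j = 0 then 0 else C (j - 1) l) * fps_X ^ l * (fps_deriv ^^ j) G)"
    using assms by (subst sum_atMost_shift_right) (auto intro!: sum.cong)
  have "fps_deriv (normal_ordered_op N C G) =
        (\<Sum>j\<le>N. \<Sum>l\<le>N. fps_const (C j l) * (of_nat l * fps_X ^ (l - 1)) * (fps_deriv ^^ j) G) +
        (\<Sum>j\<le>N. \<Sum>l\<le>N. fps_const (C j l) * fps_X ^ l * (fps_deriv ^^ Suc j) G)"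
  proof -
    have "fps_deriv (fps_const c * fps_X ^ l * H) =
          fps_const c * (of_nat l * fps_X ^ (l - 1)) * H + fps_const c * fps_X ^ l * fps_deriv H"
      for c l and H :: "'a fps"
      by (simp add: fps_deriv_power fps_of_nat algebra_simps)
    then show ?thesis
      by (simp only: normal_ordered_op_def fps_deriv_sum sum.distrib funpow.simps o_apply)
  qed
  also have "\<dots> = normal_ordered_op N (\<lambda>j l. of_nat (l + 1) * C j (l + 1)) G +
                   normal_ordered_op N (\<lambda>j l. if j = 0 then 0 else C (j - 1) l) G"
    unfolding lowered raised normal_ordered_op_def ..
  finally show ?thesis
    by (simp add: add.commute flip: normal_ordered_op_add)
qed

lemma gauss_op_normal_ordered_op:
  assumes "\<And>j l. N \<le> j + l \<Longrightarrow> C j l = 0"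
  shows "gauss_op (a, b) (normal_ordered_op N C G) =
    normal_ordered_op N (\<lambda>j l. (if j = 0 then 0 else C (j - 1) l) + of_nat (l + 1) * C j (l + 1)
                               - a * C j l - (if l = 0 then 0 else b * C j (l - 1))) G"
proof -
  have "gauss_op (a, b) (normal_ordered_op N C G) = fps_deriv (normal_ordered_op N C G)
      - fps_const a * normal_ordered_op N C G - fps_const b * (fps_X * normal_ordered_op N C G)"
    by (simp add: gauss_op_def algebra_simps)
  also have "\<dots> = normal_ordered_op N (\<lambda>j l. (if j = 0 then 0 else C (j - 1) l) + of_nat (l + 1) * C j (l + 1)
                               - a * C j l - (if l = 0 then 0 else b * C j (l - 1))) G"
    using assms
    by (simp add: fps_deriv_normal_ordered_op fps_X_mult_normal_ordered_op fps_const_mult_normal_ordered_op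
        if_distrib[of "(*) b"] flip: normal_ordered_op_diff cong: if_cong)
  finally show ?thesis .
qed

text \<open>The composite \<open>foldr gauss_op ps\<close> in normal order, i.e. as \<open>\<Sum> C\<^sub>j\<^sub>,\<^sub>l y\<^sup>l D\<^sup>j\<close>: the
  coefficient \<open>C\<^sub>j\<^sub>,\<^sub>l\<close> is \<open>normal_coeff ps j l\<close>. The recursion comes from
  \<open>D (y\<^sup>l D\<^sup>j) = l y\<^sup>l\<^sup>-\<^sup>1 D\<^sup>j + y\<^sup>l D\<^sup>j\<^sup>+\<^sup>1\<close>. It is a ring computation, used both over \<open>real\<close>
  and over the pointwise ring of functions \<open>(nat \<Rightarrow> real) \<Rightarrow> real\<close>, where it yields the
  polynomials \<open>R\<^sub>j\<^sub>,\<^sub>l\<close> themselves.\<close>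

fun normal_coeff :: "('a \<times> 'a) list \<Rightarrow> nat \<Rightarrow> nat \<Rightarrow> 'a::comm_ring_1" where
  "normal_coeff [] j l = (if j = 0 \<and> l = 0 then 1 else 0)"
| "normal_coeff ((a, b) # ps) j l = (if j = 0 then 0 else normal_coeff ps (j - 1) l)
      + of_nat (l + 1) * normal_coeff ps j (l + 1) - a * normal_coeff ps j l
      - (if l = 0 then 0 else b * normal_coeff ps j (l - 1))"

lemma normal_coeff_eq_0: "length ps < j + l \<Longrightarrow> normal_coeff ps j l = 0"
  by (induction ps arbitrary: j l) auto

lemma normal_coeff_length_0: "normal_coeff ps (length ps) 0 = 1"
  by (induction ps) (auto simp: normal_coeff_eq_0)

lemma normal_coeff_apply: "normal_coeff ps j l x = normal_coeff (map (\<lambda>(u, v). (u x, v x)) ps) j l"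
  by (induction ps arbitrary: j l) auto

lemma normal_ordered_op_Nil: "normal_ordered_op N (normal_coeff []) G = G"
proof -
  have "fps_const (normal_coeff [] j l) * fps_X ^ l * (fps_deriv ^^ j) G =
        (if l = 0 then if j = 0 then G else 0 else 0)" for j l
    by simp
  then show ?thesis
    by (simp add: normal_ordered_op_def)
qed

lemma foldr_gauss_op_eq_normal_ordered_op:
  "length ps < N \<Longrightarrow> foldr gauss_op ps G = normal_ordered_op N (normal_coeff ps) G"
proof (induction ps)
  case Nil
  then show ?case
    by (simp del: normal_coeff.simps add: normal_ordered_op_Nil)
next
  case (Cons c ps)
  have "\<And>j l. N \<le> j + l \<Longrightarrow> normal_coeff ps j l = 0"
    using Cons.prems by (intro normal_coeff_eq_0) simp
  with Cons show ?case
    by (cases c) (simp add: gauss_op_normal_ordered_op)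
qed

lemma higher_fps_deriv_egf:
  fixes g :: "nat \<Rightarrow> 'a::field_char_0"
  shows "(fps_deriv ^^ j) (Abs_fps (\<lambda>r. g r / fact r)) = Abs_fps (\<lambda>r. g (r + j) / fact r)"
proof (induction j)
  case (Suc j)
  have "fps_deriv (Abs_fps (\<lambda>r. g (r + j) / fact r)) = Abs_fps (\<lambda>r. g (r + Suc j) / fact r)"
    by (simp add: fps_eq_iff field_simps del: of_nat_Suc)
  with Suc show ?case
    by simp
qed simp

lemma fps_nth_normal_ordered_op_egf:
  fixes g :: "nat \<Rightarrow> 'a::field_char_0"
  shows "fps_nth (normal_ordered_op N C (Abs_fps (\<lambda>r. g r / fact r))) n =
    (\<Sum>j\<le>N. \<Sum>l\<le>N. if l \<le> n then g (n + j - l) * C j l / fact (n - l) else 0)"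
  by (auto simp: normal_ordered_op_def higher_fps_deriv_egf fps_sum_nth mult.assoc fps_X_power_mult_nth
      intro!: sum.cong)

lemma egf_recurrence_of_annihilation:
  fixes g :: "nat \<Rightarrow> 'a::field_char_0"
  assumes "foldr gauss_op ps (Abs_fps (\<lambda>r. g r / fact r)) = 0"
  shows "(\<Sum>j\<le>length ps. \<Sum>l\<le>length ps - j.
            if l \<le> n then g (n + j - l) * normal_coeff ps j l / fact (n - l) else 0) = 0"
proof -
  have "(\<Sum>j\<le>length ps. \<Sum>l\<le>length ps - j.
            if l \<le> n then g (n + j - l) * normal_coeff ps j l / fact (n - l) else 0) =
        (\<Sum>j\<le>Suc (length ps). \<Sum>l\<le>Suc (length ps).
            if l \<le> n then g (n + j - l) * normal_coeff ps j l / fact (n - l) else 0)"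
    by (intro sum_triangle_eq_sum_square) (auto simp: normal_coeff_eq_0)
  also have "\<dots> = fps_nth (normal_ordered_op (Suc (length ps)) (normal_coeff ps) (Abs_fps (\<lambda>r. g r / fact r))) n"
    by (rule fps_nth_normal_ordered_op_egf[symmetric])
  also have "\<dots> = fps_nth (foldr gauss_op ps (Abs_fps (\<lambda>r. g r / fact r))) n"
    by (simp add: foldr_gauss_op_eq_normal_ordered_op[of ps "Suc (length ps)"])
  finally show ?thesis
    by (simp add: assms)
qed

section \<open>Homogeneous polynomials\<close>

lemma hom_polyI:
  fixes I :: "'a set"
  assumes "finite I" and "\<And>i. i \<in> I \<Longrightarrow> (\<forall>t\<ge>d. \<alpha> i t = 0) \<and> sum (\<alpha> i) {..<d} = n"
    and "\<And>X. P X = (\<Sum>i\<in>I. c i * monomial d (\<alpha> i) X)"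
  shows "hom_poly d n P"
  unfolding hom_poly_def
proof (intro exI conjI allI)
  show "finite (\<alpha> ` I)" "\<forall>\<gamma>\<in>\<alpha> ` I. (\<forall>t\<ge>d. \<gamma> t = 0) \<and> sum \<gamma> {..<d} = n"
    using assms(1,2) by auto
  fix X
  have "P X = (\<Sum>\<gamma>\<in>\<alpha> ` I. \<Sum>i\<in>{i\<in>I. \<alpha> i = \<gamma>}. c i * monomial d (\<alpha> i) X)"
    using assms(1,3) by (simp add: sum.image_gen[of I _ \<alpha>])
  also have "\<dots> = (\<Sum>\<gamma>\<in>\<alpha> ` I. (\<Sum>i\<in>{i\<in>I. \<alpha> i = \<gamma>}. c i) * monomial d \<gamma> X)"
    by (intro sum.cong refl) (auto simp: sum_distrib_right)
  finally show "P X = (\<Sum>\<gamma>\<in>\<alpha> ` I. (\<Sum>i\<in>{i\<in>I. \<alpha> i = \<gamma>}. c i) * monomial d \<gamma> X)" .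
qed

lemma hom_polyE:
  assumes "hom_poly d n P"
  obtains M c where "finite M" "\<And>\<alpha>. \<alpha> \<in> M \<Longrightarrow> (\<forall>i\<ge>d. \<alpha> i = 0) \<and> sum \<alpha> {..<d} = n"
    "\<And>X. P X = (\<Sum>\<alpha>\<in>M. c \<alpha> * monomial d \<alpha> X)"
  using assms unfolding hom_poly_def by blast

lemma hom_poly_zero: "hom_poly d n 0"
  unfolding hom_poly_def by (rule exI[of _ "{}"]) simp

lemma hom_poly_const: "hom_poly d 0 (\<lambda>X. c)"
  by (rule hom_polyI[of "{()}" d "\<lambda>_ _. 0" _ _ "\<lambda>_. c"]) (auto simp: monomial_def)

lemma hom_poly_one: "hom_poly d 0 1"
  using hom_poly_const[of d 1] by (simp add: one_fun_def)

lemma hom_poly_coord: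
  assumes "i < d"
  shows "hom_poly d 1 (\<lambda>X. X i)"
proof (rule hom_polyI[of "{()}" d "\<lambda>_ t. if t = i then 1 else 0" _ _ "\<lambda>_. 1"])
  have "monomial d (\<lambda>t. if t = i then 1 else 0) X = X i" for X
    unfolding monomial_def using assms
    by (simp add: if_distrib[of "\<lambda>e. X _ ^ e"] cong: if_cong)
  then show "X i = (\<Sum>_\<in>{()}. 1 * monomial d (\<lambda>t. if t = i then 1 else 0) X)" for X
    by simp
qed (use assms in auto)

lemma hom_poly_add:
  assumes "hom_poly d n P" "hom_poly d n Q"
  shows "hom_poly d n (P + Q)"
proof -
  obtain M1 c1 where 1: "finite M1" "\<And>\<alpha>. \<alpha> \<in> M1 \<Longrightarrow> (\<forall>i\<ge>d. \<alpha> i = 0) \<and> sum \<alpha> {..<d} = n"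
    "\<And>X. P X = (\<Sum>\<alpha>\<in>M1. c1 \<alpha> * monomial d \<alpha> X)"
    using hom_polyE[OF assms(1)] by blast
  obtain M2 c2 where 2: "finite M2" "\<And>\<alpha>. \<alpha> \<in> M2 \<Longrightarrow> (\<forall>i\<ge>d. \<alpha> i = 0) \<and> sum \<alpha> {..<d} = n"
    "\<And>X. Q X = (\<Sum>\<alpha>\<in>M2. c2 \<alpha> * monomial d \<alpha> X)"
    using hom_polyE[OF assms(2)] by blast
  show ?thesis
    by (rule hom_polyI[of "M1 <+> M2" d "case_sum id id" n _ "case_sum c1 c2"])
       (use 1 2 in \<open>auto simp: sum.Plus\<close>)
qed

lemma monomial_add: "monomial d (\<lambda>t. \<alpha> t + \<beta> t) X = monomial d \<alpha> X * monomial d \<beta> X"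
  by (simp add: monomial_def power_add prod.distrib)

lemma hom_poly_mult:
  assumes "hom_poly d n P" "hom_poly d n' Q"
  shows "hom_poly d (n + n') (P * Q)"
proof -
  obtain M1 c1 where 1: "finite M1" "\<And>\<alpha>. \<alpha> \<in> M1 \<Longrightarrow> (\<forall>i\<ge>d. \<alpha> i = 0) \<and> sum \<alpha> {..<d} = n"
    "\<And>X. P X = (\<Sum>\<alpha>\<in>M1. c1 \<alpha> * monomial d \<alpha> X)"
    using hom_polyE[OF assms(1)] by blast
  obtain M2 c2 where 2: "finite M2" "\<And>\<alpha>. \<alpha> \<in> M2 \<Longrightarrow> (\<forall>i\<ge>d. \<alpha> i = 0) \<and> sum \<alpha> {..<d} = n'"
    "\<And>X. Q X = (\<Sum>\<alpha>\<in>M2. c2 \<alpha> * monomial d \<alpha> X)"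
    using hom_polyE[OF assms(2)] by blast
  show ?thesis
  proof (rule hom_polyI[of "M1 \<times> M2" d "\<lambda>(\<alpha>, \<beta>) t. \<alpha> t + \<beta> t" _ _ "\<lambda>(\<alpha>, \<beta>). c1 \<alpha> * c2 \<beta>"])
    show "(P * Q) X = (\<Sum>i\<in>M1 \<times> M2. (case i of (\<alpha>, \<beta>) \<Rightarrow> c1 \<alpha> * c2 \<beta>) *
                         monomial d (case i of (\<alpha>, \<beta>) \<Rightarrow> \<lambda>t. \<alpha> t + \<beta> t) X)" for X
      by (auto simp: 1 2 sum_product sum.cartesian_product monomial_add algebra_simps intro!: sum.cong)
  qed (use 1 2 in \<open>auto simp: sum.distrib\<close>)
qed

lemma hom_poly_mult_cases:
  assumes "hom_poly d i U" and "Q = 0 \<or> i \<le> e \<and> hom_poly d (e - i) Q"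
  shows "hom_poly d e (U * Q)"
  using assms hom_poly_mult[OF assms(1), of "e - i" Q] by (auto simp: hom_poly_zero)

lemma hom_poly_diff:
  assumes "hom_poly d n P" "hom_poly d n Q"
  shows "hom_poly d n (P - Q)"
proof -
  have diff_eq: "P - Q = P + (\<lambda>X. - 1) * Q"
    by (simp add: fun_eq_iff)
  have "hom_poly d (0 + n) ((\<lambda>X. - 1) * Q)"
    by (intro hom_poly_mult hom_poly_const assms(2))
  then show ?thesis
    unfolding diff_eq by (intro hom_poly_add assms(1)) simp
qed

lemma hom_poly_sum:
  assumes "finite I" "\<And>i. i \<in> I \<Longrightarrow> hom_poly d n (F i)"
  shows "hom_poly d n (\<lambda>X. \<Sum>i\<in>I. F i X)"
  using assms
proof (induction I rule: finite_induct)
  case empty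
  then show ?case
    using hom_poly_zero by (simp add: zero_fun_def)
next
  case (insert i I)
  then have "hom_poly d n (F i + (\<lambda>X. \<Sum>i\<in>I. F i X))"
    by (intro hom_poly_add) auto
  with insert show ?case
    by (simp add: plus_fun_def)
qed

lemma hom_poly_lin_form: "hom_poly d 1 (lin_form d \<mu>)"
proof -
  have "hom_poly d 1 (\<lambda>X. \<mu> i * X i)" if "i < d" for i
    using hom_poly_mult[OF hom_poly_const hom_poly_coord[OF that]] by (simp add: times_fun_def)
  then have "hom_poly d 1 (\<lambda>X. \<Sum>i<d. \<mu> i * X i)"
    by (intro hom_poly_sum) auto
  then show ?thesis
    by (simp add: lin_form_def[abs_def])
qed

lemma hom_poly_quad_form: "hom_poly d 2 (quad_form d S)"
proof -
  have "hom_poly d 2 (\<lambda>X. X i * S i i' * X i')" if "i < d" "i' < d" for i i'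
    using hom_poly_mult[OF hom_poly_mult[OF hom_poly_coord hom_poly_const] hom_poly_coord, OF that]
    by (simp add: times_fun_def numeral_2_eq_2)
  then have "hom_poly d 2 (\<lambda>X. \<Sum>i<d. \<Sum>i'<d. X i * S i i' * X i')"
    by (intro hom_poly_sum) auto
  then show ?thesis
    by (simp add: quad_form_def[abs_def])
qed

lemma hom_poly_normal_coeff:
  assumes "\<forall>(u, v) \<in> set ps. hom_poly d 1 u \<and> hom_poly d 2 v" and "e + j = length ps + l"
  shows "hom_poly d e (normal_coeff ps j l)"
  using assms
proof (induction ps arbitrary: e j l)
  case Nil
  then show ?case
    by (auto simp: hom_poly_one hom_poly_zero)
next
  case (Cons p ps)
  obtain u v where p: "p = (u, v)"
    by fastforce
  define n where "n = length ps"
  have u: "hom_poly d 1 u" and v: "hom_poly d 2 v"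
    using Cons.prems(1) p by auto
  have IH: "hom_poly d e' (normal_coeff ps j' l')" if "e' + j' = n + l'" for e' j' l'
    by (rule Cons.IH) (use Cons.prems(1) that n_def in auto)
  have vanish: "normal_coeff ps j' l' = 0" if "n < j' + l'" for j' l'
    using that n_def by (simp add: normal_coeff_eq_0)
  have e: "e + j = Suc n + l"
    using Cons.prems(2) n_def by simp
  have "hom_poly d e (if j = 0 then 0 else normal_coeff ps (j - 1) l)"
    using e by (cases j) (simp_all add: hom_poly_zero IH)
  moreover have "hom_poly d e (of_nat (l + 1) * normal_coeff ps j (l + 1))"
    using hom_poly_mult[OF hom_poly_const IH[of e j "l + 1"]] e by (simp add: of_nat_fun)
  moreover have "hom_poly d e (u * normal_coeff ps j l)"
    using e by (intro hom_poly_mult_cases[OF u]) (cases e; simp add: vanish IH)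
  moreover have "hom_poly d e (if l = 0 then 0 else v * normal_coeff ps j (l - 1))"
  proof (cases "l = 0")
    case False
    with e have "hom_poly d e (v * normal_coeff ps j (l - 1))"
      by (intro hom_poly_mult_cases[OF v]) (cases "e < 2"; simp add: vanish IH)
    with False show ?thesis
      by simp
  qed (simp add: hom_poly_zero)
  ultimately show ?case
    unfolding p normal_coeff.simps n_def[symmetric] by (intro hom_poly_diff hom_poly_add)
qed

section \<open>Simple polynomials\<close>

lemma simple_wrtE:
  assumes "simple_wrt SS A B Q"
  obtains T c L where "T \<le> A" "\<And>t. t < T \<Longrightarrow> \<bar>c t\<bar> \<le> real A \<and> length (L t) \<le> B \<and> set (L t) \<subseteq> SS"
    "\<And>X. Q X = (\<Sum>t<T. c t * prod_list (map (\<lambda>q. q X) (L t)))"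
  using assms unfolding simple_wrt_def by blast

lemma simple_wrt_zero: "simple_wrt SS A B 0"
  unfolding simple_wrt_def by (rule exI[of _ 0]) simp

lemma simple_wrt_one: "1 \<le> A \<Longrightarrow> simple_wrt SS A B 1"
  unfolding simple_wrt_def
  by (intro exI[of _ 1] exI[of _ "\<lambda>_. 1"] exI[of _ "\<lambda>_. []"]) auto

lemma simple_wrt_mono:
  assumes "simple_wrt SS A B Q" "A \<le> A'" "B \<le> B'"
  shows "simple_wrt SS A' B' Q"
proof -
  obtain T c L where "T \<le> A" "\<And>t. t < T \<Longrightarrow> \<bar>c t\<bar> \<le> real A \<and> length (L t) \<le> B \<and> set (L t) \<subseteq> SS"
    "\<And>X. Q X = (\<Sum>t<T. c t * prod_list (map (\<lambda>q. q X) (L t)))"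
    using simple_wrtE[OF assms(1)] by blast
  with assms(2,3) show ?thesis
    unfolding simple_wrt_def
    by (intro exI[of _ T] exI[of _ c] exI[of _ L]) (force intro: order_trans)
qed

lemma simple_wrt_add:
  assumes "simple_wrt SS A B P" "simple_wrt SS A' B Q"
  shows "simple_wrt SS (A + A') B (P + Q)"
proof -
  obtain T1 c1 L1 where 1: "T1 \<le> A" "\<And>t. t < T1 \<Longrightarrow> \<bar>c1 t\<bar> \<le> real A \<and> length (L1 t) \<le> B \<and> set (L1 t) \<subseteq> SS"
    "\<And>X. P X = (\<Sum>t<T1. c1 t * prod_list (map (\<lambda>q. q X) (L1 t)))"
    using simple_wrtE[OF assms(1)] by blast
  obtain T2 c2 L2 where 2: "T2 \<le> A'" "\<And>t. t < T2 \<Longrightarrow> \<bar>c2 t\<bar> \<le> real A' \<and> length (L2 t) \<le> B \<and> set (L2 t) \<subseteq> SS"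
    "\<And>X. Q X = (\<Sum>t<T2. c2 t * prod_list (map (\<lambda>q. q X) (L2 t)))"
    using simple_wrtE[OF assms(2)] by blast
  define c where "c t = (if t < T1 then c1 t else c2 (t - T1))" for t
  define L where "L t = (if t < T1 then L1 t else L2 (t - T1))" for t
  show ?thesis
    unfolding simple_wrt_def
  proof (intro exI[of _ "T1 + T2"] exI[of _ c] exI[of _ L] conjI allI impI)
    show "T1 + T2 \<le> A + A'"
      using 1 2 by simp
    fix t assume t: "t < T1 + T2"
    have "\<bar>c t\<bar> \<le> real (A + A') \<and> length (L t) \<le> B \<and> set (L t) \<subseteq> SS"
    proof (cases "t < T1")
      case True
      then show ?thesis
        using 1(2)[of t] by (auto simp: c_def L_def)
    next
      case False
      with t have "t - T1 < T2"
        by simp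
      with False 2(2)[of "t - T1"] show ?thesis
        by (auto simp: c_def L_def)
    qed
    then show "\<bar>c t\<bar> \<le> real (A + A')" "length (L t) \<le> B" "set (L t) \<subseteq> SS"
      by auto
  next
    have split: "(\<Sum>t<T1 + T2. f t) = (\<Sum>t<T1. f t) + (\<Sum>t<T2. f (T1 + t))" for f :: "nat \<Rightarrow> real"
      by (induction T2) (simp_all add: add_ac)
    show "(P + Q) X = (\<Sum>t<T1 + T2. c t * prod_list (map (\<lambda>q. q X) (L t)))" for X
      by (simp add: 1 2 c_def L_def split)
  qed
qed

lemma simple_wrt_const_mult:
  assumes "simple_wrt SS A B P" "1 \<le> R" "\<bar>r\<bar> \<le> real R"
  shows "simple_wrt SS (R * A) B ((\<lambda>X. r) * P)"
proof -
  obtain T c L where 1: "T \<le> A" "\<And>t. t < T \<Longrightarrow> \<bar>c t\<bar> \<le> real A \<and> length (L t) \<le> B \<and> set (L t) \<subseteq> SS"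
    "\<And>X. P X = (\<Sum>t<T. c t * prod_list (map (\<lambda>q. q X) (L t)))"
    using simple_wrtE[OF assms(1)] by blast
  show ?thesis
    unfolding simple_wrt_def
  proof (intro exI[of _ T] exI[of _ "\<lambda>t. r * c t"] exI[of _ L] conjI allI impI)
    show "T \<le> R * A"
      using 1(1) assms(2) by (metis le_trans mult_1 mult_le_mono1)
    fix t assume "t < T"
    then have "\<bar>r\<bar> * \<bar>c t\<bar> \<le> real R * real A"
      using 1(2) assms(3) by (intro mult_mono) auto
    then show "\<bar>r * c t\<bar> \<le> real (R * A)"
      by (simp add: abs_mult)
    show "length (L t) \<le> B" "set (L t) \<subseteq> SS"
      using 1(2) \<open>t < T\<close> by auto
  next
    show "((\<lambda>X. r) * P) X = (\<Sum>t<T. r * c t * prod_list (map (\<lambda>q. q X) (L t)))" for X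
      by (simp add: 1 sum_distrib_left mult.assoc)
  qed
qed

lemma simple_wrt_diff:
  assumes "simple_wrt SS A B P" "simple_wrt SS A' B Q"
  shows "simple_wrt SS (A + A') B (P - Q)"
proof -
  have "simple_wrt SS (1 * A') B ((\<lambda>X. - 1) * Q)"
    by (rule simple_wrt_const_mult[OF assms(2)]) auto
  then have "simple_wrt SS (A + A') B (P + (\<lambda>X. - 1) * Q)"
    by (intro simple_wrt_add assms(1)) simp
  moreover have "P + (\<lambda>X. - 1) * Q = P - Q"
    by (simp add: fun_eq_iff)
  ultimately show ?thesis
    by simp
qed

lemma simple_wrt_mult_generator:
  assumes "simple_wrt SS A B P" "s \<in> SS"
  shows "simple_wrt SS A (Suc B) (s * P)"
proof -
  obtain T c L where 1: "T \<le> A" "\<And>t. t < T \<Longrightarrow> \<bar>c t\<bar> \<le> real A \<and> length (L t) \<le> B \<and> set (L t) \<subseteq> SS"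
    "\<And>X. P X = (\<Sum>t<T. c t * prod_list (map (\<lambda>q. q X) (L t)))"
    using simple_wrtE[OF assms(1)] by blast
  show ?thesis
    unfolding simple_wrt_def
  proof (intro exI[of _ T] exI[of _ c] exI[of _ "\<lambda>t. s # L t"] conjI allI impI)
    show "(s * P) X = (\<Sum>t<T. c t * prod_list (map (\<lambda>q. q X) (s # L t)))" for X
      by (simp add: 1 sum_distrib_left algebra_simps)
  qed (use 1 assms(2) in auto)
qed

lemma simple_wrt_normal_coeff:
  assumes "\<forall>(u, v) \<in> set ps. u \<in> SS \<and> v \<in> SS"
  shows "simple_wrt SS (4 ^ length ps * fact (length ps)) (length ps) (normal_coeff ps j l)"
  using assms
proof (induction ps arbitrary: j l)
  case Nil
  then show ?case
    by (auto simp: simple_wrt_one simple_wrt_zero)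
next
  case (Cons p ps)
  obtain u v where p: "p = (u, v)"
    by fastforce
  define n where "n = length ps"
  define A :: nat where "A = 4 ^ n * fact n"
  have u: "u \<in> SS" and v: "v \<in> SS"
    using Cons.prems p by auto
  have IH: "simple_wrt SS A n (normal_coeff ps j' l')" for j' l'
    using Cons A_def n_def by auto
  have "1 \<le> A"
    by (simp add: A_def)
  have t1: "simple_wrt SS (Suc n * A) (Suc n) (if j = 0 then 0 else normal_coeff ps (j - 1) l)"
    by (simp add: simple_wrt_zero simple_wrt_mono[OF IH])
  have t2: "simple_wrt SS (Suc n * A) (Suc n) (of_nat (l + 1) * normal_coeff ps j (l + 1))"
  proof (cases "l < n")
    case True
    have "simple_wrt SS (Suc n * A) n ((\<lambda>X. of_nat (l + 1)) * normal_coeff ps j (l + 1))"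
      by (rule simple_wrt_const_mult[OF IH]) (use True in auto)
    then show ?thesis
      by (simp add: of_nat_fun simple_wrt_mono)
  next
    case False
    then show ?thesis
      using normal_coeff_eq_0[of ps j "l + 1"] by (simp add: n_def simple_wrt_zero)
  qed
  have t3: "simple_wrt SS (Suc n * A) (Suc n) (u * normal_coeff ps j l)"
    by (rule simple_wrt_mono[OF simple_wrt_mult_generator[OF IH u]]) simp_all
  have t4: "simple_wrt SS (Suc n * A) (Suc n) (if l = 0 then 0 else v * normal_coeff ps j (l - 1))"
    using simple_wrt_mono[OF simple_wrt_mult_generator[OF IH v], of "Suc n * A"]
    by (simp add: simple_wrt_zero)
  have "simple_wrt SS (Suc n * A + Suc n * A + Suc n * A + Suc n * A) (Suc n) (normal_coeff (p # ps) j l)"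
    unfolding p normal_coeff.simps by (intro simple_wrt_diff simple_wrt_add t1 t2 t3 t4)
  moreover have "Suc n * A + Suc n * A + Suc n * A + Suc n * A = 4 ^ Suc n * fact (Suc n)"
    by (simp add: A_def algebra_simps)
  ultimately show ?case
    by (simp add: n_def)
qed

section \<open>The generating function\<close>

lemma monomial_scale: "monomial d \<alpha> (\<lambda>i. X i * y) = monomial d \<alpha> X * y ^ sum \<alpha> {..<d}"
  by (simp add: monomial_def power_mult_distrib prod.distrib power_sum)

lemma poly_deg_le_on_line:
  assumes "poly_deg_le d m P"
  shows "\<exists>q. degree q \<le> m \<and> (\<forall>y. P (\<lambda>i. X i * y) = poly q y)"
proof -
  obtain M c where M: "finite M" "\<forall>\<alpha>\<in>M. (\<forall>i\<ge>d. \<alpha> i = 0) \<and> sum \<alpha> {..<d} \<le> m"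
    and P: "\<And>X. P X = (\<Sum>\<alpha>\<in>M. c \<alpha> * monomial d \<alpha> X)"
    using assms unfolding poly_deg_le_def by blast
  define q where "q = (\<Sum>\<alpha>\<in>M. monom (c \<alpha> * monomial d \<alpha> X) (sum \<alpha> {..<d}))"
  have "degree q \<le> m"
    unfolding q_def using M by (intro degree_sum_le) (auto intro: order_trans[OF degree_monom_le])
  moreover have "P (\<lambda>i. X i * y) = poly q y" for y
    by (simp add: P q_def poly_sum poly_monom monomial_scale mult.assoc)
  ultimately show ?thesis
    by blast
qed

lemma primary_terms_annihilated:
  assumes "\<forall>j<k. poly_deg_le d m (P j)"
  shows "foldr gauss_op (annihilator m (\<lambda>j. (lin_form d (\<mu> j) X, quad_form d (S j) X)) k)
           (Abs_fps (\<lambda>r. primary_term d k \<mu> S P r X / fact r)) = 0"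
proof -
  define a where "a j = lin_form d (\<mu> j) X" for j
  define b where "b j = quad_form d (S j) X" for j
  have "\<forall>j\<in>{..<k}. \<exists>q. degree q \<le> m \<and> (\<forall>y. P j (\<lambda>i. X i * y) = poly q y)"
    using assms poly_deg_le_on_line by blast
  then obtain q where q: "\<forall>j\<in>{..<k}. degree (q j) \<le> m \<and> (\<forall>y. P j (\<lambda>i. X i * y) = poly (q j) y)"
    by (rule bchoice[THEN exE])
  have "\<forall>j\<in>{..<k}. \<exists>E. (\<lambda>y. exp (a j * y + b j * y\<^sup>2 / 2)) has_fps_expansion E \<and>
                        gauss_op (a j, b j) E = 0"
    using gaussian_has_fps_expansion by blast
  then obtain E where E: "\<forall>j\<in>{..<k}. (\<lambda>y. exp (a j * y + b j * y\<^sup>2 / 2)) has_fps_expansion E j \<and>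
                                  gauss_op (a j, b j) (E j) = 0"
    by (rule bchoice[THEN exE])
  have "gen_fun d k \<mu> S P X = (\<lambda>y. \<Sum>j<k. poly (q j) y * exp (a j * y + b j * y\<^sup>2 / 2))"
    using q by (simp add: gen_fun_def a_def b_def fun_eq_iff)
  then have "gen_fun d k \<mu> S P X has_fps_expansion (\<Sum>j<k. fps_of_poly (q j) * E j)"
    using E by (simp only:) (intro has_fps_expansion_sum has_fps_expansion_mult has_fps_expansion_poly; simp)
  then have "Abs_fps (\<lambda>r. primary_term d k \<mu> S P r X / fact r) = (\<Sum>j<k. fps_of_poly (q j) * E j)"
    by (simp add: fps_eq_iff fps_nth_eq_higher_deriv primary_term_def)
  moreover have "foldr gauss_op (annihilator m (\<lambda>j. (a j, b j)) k) (fps_of_poly (q j) * E j) = 0"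
    if "j < k" for j
    using E q that by (intro foldr_gauss_op_annihilator[of "\<lambda>j. (a j, b j)" j]) auto
  ultimately show ?thesis
    by (simp add: foldr_gauss_op_sum a_def b_def)
qed

lemma primary_term_recurrence:
  fixes \<mu> :: "nat \<Rightarrow> nat \<Rightarrow> real" and S :: "nat \<Rightarrow> nat \<Rightarrow> nat \<Rightarrow> real"
  assumes "\<forall>j<k. poly_deg_le d m (P j)"
  defines "ps \<equiv> annihilator m (\<lambda>j. (lin_form d (\<mu> j), quad_form d (S j))) k"
  shows "(\<Sum>j\<le>length ps. \<Sum>l\<le>length ps - j. if l \<le> n
           then primary_term d k \<mu> S P (n + j - l) X * normal_coeff ps j l X / fact (n - l) else 0) = 0"
proof -
  define ps\<^sub>X where "ps\<^sub>X = annihilator m (\<lambda>j. (lin_form d (\<mu> j) X, quad_form d (S j) X)) k"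
  have eval: "normal_coeff ps j l X = normal_coeff ps\<^sub>X j l" for j l
    by (simp add: ps_def ps\<^sub>X_def normal_coeff_apply map_annihilator o_def)
  have "length ps\<^sub>X = length ps"
    by (simp add: ps_def ps\<^sub>X_def length_annihilator)
  then show ?thesis
    using egf_recurrence_of_annihilation[OF primary_terms_annihilated[OF assms(1), where \<mu> = \<mu> and S = S and X = X],
        where n = n]
    unfolding eval ps\<^sub>X_def by simp
qed

theorem lemma5p4:
  fixes k m :: nat
  assumes "0 < k" and "0 < m"
  defines "\<kappa> \<equiv> (m + 1) * (2 ^ k - 1)"
  shows "\<exists>A B :: nat. \<forall>d (\<mu> :: nat \<Rightarrow> nat \<Rightarrow> real) (S :: nat \<Rightarrow> nat \<Rightarrow> nat \<Rightarrow> real)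
            (P :: nat \<Rightarrow> (nat \<Rightarrow> real) \<Rightarrow> real).
     0 < d \<longrightarrow> (\<forall>j<k. covariance_ok d (S j)) \<longrightarrow> (\<forall>j<k. poly_deg_le d m (P j)) \<longrightarrow>
     (\<exists>R :: nat \<Rightarrow> nat \<Rightarrow> (nat \<Rightarrow> real) \<Rightarrow> real.
        (\<forall>j\<le>\<kappa>. \<forall>l\<le>\<kappa> - j. hom_poly d (\<kappa> - j + l) (R j l)) \<and>
        R \<kappa> 0 = (\<lambda>X. 1) \<and>
        (\<forall>j\<le>\<kappa>. \<forall>l\<le>\<kappa> - j.
            simple_wrt ((\<lambda>j. lin_form d (\<mu> j)) ` {..<k} \<union> (\<lambda>j. quad_form d (S j)) ` {..<k})
              A B (R j l)) \<and>
        (\<forall>a\<ge>\<kappa>. \<forall>X. (\<Sum>j\<le>\<kappa>. \<Sum>l\<le>\<kappa> - j.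
            (if l \<le> a - \<kappa> then primary_term d k \<mu> S P (a - \<kappa> + j - l) X * R j l X
                               / fact (a - \<kappa> - l) else 0)) = 0))"
proof (rule exI[of _ "4 ^ \<kappa> * fact \<kappa>"], rule exI[of _ \<kappa>], intro allI impI)
  fix d :: nat and \<mu> :: "nat \<Rightarrow> nat \<Rightarrow> real" and S :: "nat \<Rightarrow> nat \<Rightarrow> nat \<Rightarrow> real"
    and P :: "nat \<Rightarrow> (nat \<Rightarrow> real) \<Rightarrow> real"
  assume "0 < d" "\<forall>j<k. covariance_ok d (S j)" and P: "\<forall>j<k. poly_deg_le d m (P j)"
  let ?SS = "(\<lambda>j. lin_form d (\<mu> j)) ` {..<k} \<union> (\<lambda>j. quad_form d (S j)) ` {..<k}"
  define ps where "ps = annihilator m (\<lambda>j. (lin_form d (\<mu> j), quad_form d (S j))) k"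
  have len: "length ps = \<kappa>"
    by (simp add: ps_def length_annihilator \<kappa>_def)
  have gens: "set ps \<subseteq> (\<lambda>j. (lin_form d (\<mu> j), quad_form d (S j))) ` {..<k}"
    unfolding ps_def by (rule set_annihilator)
  then have hom: "\<forall>(u, v) \<in> set ps. hom_poly d 1 u \<and> hom_poly d 2 v"
    using hom_poly_lin_form hom_poly_quad_form by fastforce
  from gens have simple: "\<forall>(u, v) \<in> set ps. u \<in> ?SS \<and> v \<in> ?SS"
    by auto
  show "\<exists>R. (\<forall>j\<le>\<kappa>. \<forall>l\<le>\<kappa> - j. hom_poly d (\<kappa> - j + l) (R j l)) \<and> R \<kappa> 0 = (\<lambda>X. 1) \<and>
        (\<forall>j\<le>\<kappa>. \<forall>l\<le>\<kappa> - j. simple_wrt ?SS (4 ^ \<kappa> * fact \<kappa>) \<kappa> (R j l)) \<and>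
        (\<forall>a\<ge>\<kappa>. \<forall>X. (\<Sum>j\<le>\<kappa>. \<Sum>l\<le>\<kappa> - j.
            (if l \<le> a - \<kappa> then primary_term d k \<mu> S P (a - \<kappa> + j - l) X * R j l X
                               / fact (a - \<kappa> - l) else 0)) = 0)"
  proof (intro exI[of _ "normal_coeff ps"] conjI allI impI)
    show "hom_poly d (\<kappa> - j + l) (normal_coeff ps j l)" if "j \<le> \<kappa>" for j l
      using that by (intro hom_poly_normal_coeff[OF hom]) (simp add: len)
    show "normal_coeff ps \<kappa> 0 = (\<lambda>X. 1)"
      using normal_coeff_length_0[of ps] by (simp add: len one_fun_def)
    show "simple_wrt ?SS (4 ^ \<kappa> * fact \<kappa>) \<kappa> (normal_coeff ps j l)" for j l
      using simple_wrt_normal_coeff[OF simple] by (simp add: len)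
    show "(\<Sum>j\<le>\<kappa>. \<Sum>l\<le>\<kappa> - j. if l \<le> a - \<kappa> then primary_term d k \<mu> S P (a - \<kappa> + j - l) X *
            normal_coeff ps j l X / fact (a - \<kappa> - l) else 0) = 0" for a X
      using primary_term_recurrence[OF P, where \<mu> = \<mu> and S = S and n = "a - \<kappa>" and X = X]
      by (simp only: ps_def[symmetric] len)
  qed
qed

end
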